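(* Let $(M_1,M_2)$ be a state of a duplex network, fix $\ell\in\{1,2\}$, and let $\mathcal P=\big((v_0\xrightarrow{\ell_1}v_1),\dots,(v_{k-1}\xrightarrow{\ell_k}v_k)\big)$ be a CLAP (with chosen witness paths) of minimum length among all CLAPs with endpoints $(v_0,v_k)$. If there exist $i<j$ with $\ell_i=\ell_j=\ell$ such that the witness alternating paths of the $i$-th and $j$-th segments share at least one edge, then there exists another CLAP between $v_0$ and $v_k$ with strictly fewer segments.
   Context: A duplex network consists of directed graphs $G_1=(V,E_1)$, $G_2=(V,E_2)$ on a common finite node set $V$. For $\ell\in\{1,2\}$, $\mathcal B_\ell$ is the bipartite graph with vertex classes $V^+=\{v^+\}$, $V^-=\{v^-\}$ and an edge $\{u^+,v^-\}$ for each $(u,v)\in E_\ell$. A state is a pair of matchings $M_\ell$ in $\mathcal B_\ell$; $D_\ell=\{v\in V: v^-\text{ uncovered by }M_\ell\}$, $\mathrm{DD}_1=D_1\setminus D_2$, $\mathrm{DD}_2=D_2\setminus D_1$. An admissible segment $(u\xrightarrow{\ell}v)$ requires an $M_\ell$-alternating path (simple path in $\mathcal B_\ell$ alternating between $M_\ell$ and non-$M_\ell$ edges) between $u^-$ and $v^-$, called a witness path, and: for $\ell=1$, $u\in D_1$, $v\notin D_1$; for $\ell=2$, $u\notin D_2$, $v\in D_2$. A CLAP is a sequence of admissible segments $v_0\xrightarrow{\ell_1}v_1\cdots\xrightarrow{\ell_k}v_k$ with $v_0\in\mathrm{DD}_1$, $v_k\in\mathrm{DD}_2$, $\ell_{i+1}\ne\ell_i$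 for all $i$, and $v_0,\dots,v_k$ pairwise distinct; its length is the number $k$ of segments. *)

theory Defs
  imports Main
begin

text \<open>Vertices of the bipartite graph B_l: Pl v is v^+, Mi v is v^-.\<close>
datatype 'v bvert = Pl 'v | Mi 'v

text \<open>The directed graph G_l is given by its arc set E :: ('v * 'v) set; the arc (u,v)
  corresponds to the undirected edge {u^+, v^-} of B_l.\<close>

definition bip_edge :: "('v \<times> 'v) set \<Rightarrow> 'v bvert \<Rightarrow> 'v bvert \<Rightarrow> bool" where
  "bip_edge E a b \<longleftrightarrow> (\<exists>u v. (u, v) \<in> E \<and> {a, b} = {Pl u, Mi v})"

definition is_matching :: "('v \<times> 'v) set \<Rightarrow> ('v \<times> 'v) set \<Rightarrow> bool" where
  "is_matching E M \<longleftrightarrow> M \<subseteq> E \<and>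
     (\<forall>a b c d. (a, b) \<in> M \<and> (c, d) \<in> M \<and> (a = c \<or> b = d) \<longrightarrow> (a, b) = (c, d))"

text \<open>Uncovered minus-vertices: D = {v in V. v^- not covered by M}.\<close>
definition uncovered :: "'v set \<Rightarrow> ('v \<times> 'v) set \<Rightarrow> 'v set" where
  "uncovered V M = {v \<in> V. \<not> (\<exists>u. (u, v) \<in> M)}"

definition path_edges :: "'v bvert list \<Rightarrow> 'v bvert set set" where
  "path_edges p = {{p ! n, p ! Suc n} | n. Suc n < length p}"

definition alt_path :: "('v \<times> 'v) set \<Rightarrow> ('v \<times> 'v) set \<Rightarrow> 'v bvert list \<Rightarrow> 'v \<Rightarrow> 'v \<Rightarrow> bool" where
  "alt_path E M p u v \<longleftrightarrow>
     p \<noteq> [] \<and> hd p = Mi u \<and> last p = Mi v \<and> distinct p \<and>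
     (\<forall>n. Suc n < length p \<longrightarrow> bip_edge E (p ! n) (p ! Suc n)) \<and>
     (\<forall>n. Suc (Suc n) < length p \<longrightarrow>
        (bip_edge M (p ! n) (p ! Suc n) \<longleftrightarrow> \<not> bip_edge M (p ! Suc n) (p ! Suc (Suc n))))"

definition lay :: "nat \<Rightarrow> 'a \<Rightarrow> 'a \<Rightarrow> 'a" where
  "lay l x1 x2 = (if l = 1 then x1 else x2)"

definition admissible_seg ::
  "'v set \<Rightarrow> ('v \<times> 'v) set \<Rightarrow> ('v \<times> 'v) set \<Rightarrow> ('v \<times> 'v) set \<Rightarrow> ('v \<times> 'v) set \<Rightarrow>
   'v \<Rightarrow> nat \<Rightarrow> 'v \<Rightarrow> 'v bvert list \<Rightarrow> bool" where
  "admissible_seg V E1 E2 M1 M2 u l v p \<longleftrightarrow>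
     l \<in> {1, 2} \<and> u \<in> V \<and> v \<in> V \<and>
     alt_path (lay l E1 E2) (lay l M1 M2) p u v \<and>
     (l = 1 \<longrightarrow> u \<in> uncovered V M1 \<and> v \<notin> uncovered V M1) \<and>
     (l = 2 \<longrightarrow> u \<notin> uncovered V M2 \<and> v \<in> uncovered V M2)"

text \<open>CLAP with chosen witness paths: vertices vs = [v_0,...,v_k], layers
  ls = [l_1,...,l_k], witness paths ps (all 0-indexed).\<close>
definition clap_w ::
  "'v set \<Rightarrow> ('v \<times> 'v) set \<Rightarrow> ('v \<times> 'v) set \<Rightarrow> ('v \<times> 'v) set \<Rightarrow> ('v \<times> 'v) set \<Rightarrow>
   'v list \<Rightarrow> nat list \<Rightarrow> 'v bvert list list \<Rightarrow> bool" where
  "clap_w V E1 E2 M1 M2 vs ls ps \<longleftrightarrow>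
     length vs = Suc (length ls) \<and> length ps = length ls \<and>
     (\<forall>i < length ls. admissible_seg V E1 E2 M1 M2 (vs ! i) (ls ! i) (vs ! Suc i) (ps ! i)) \<and>
     hd vs \<in> uncovered V M1 - uncovered V M2 \<and>
     last vs \<in> uncovered V M2 - uncovered V M1 \<and>
     (\<forall>i. Suc i < length ls \<longrightarrow> ls ! Suc i \<noteq> ls ! i) \<and>
     distinct vs"

definition clap ::
  "'v set \<Rightarrow> ('v \<times> 'v) set \<Rightarrow> ('v \<times> 'v) set \<Rightarrow> ('v \<times> 'v) set \<Rightarrow> ('v \<times> 'v) set \<Rightarrow>
   'v list \<Rightarrow> nat list \<Rightarrow> bool" where
  "clap V E1 E2 M1 M2 vs ls \<longleftrightarrow> (\<exists>ps. clap_w V E1 E2 M1 M2 vs ls ps)"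

end

theory Submission
  imports Defs
begin

text \<open>The witness paths of two layer-1 segments both start at an uncovered minus vertex
  (those of layer-2 segments both end at one; reverse them). Along such an alternating path the
  matched edges are exactly the ones traversed from a plus to a minus vertex, a description that
  does not depend on the position along the path. Hence following the i-th witness path up to
  its first vertex on the j-th one and then the rest of the j-th path is again an alternating
  path, now from v_i^- to v_(j+1)^-, i.e. the witness of a segment v_i -l-> v_(j+1). Replacing
  segments i, ..., j by it gives a CLAP with the same ends and j - i fewer segments; layers still
  alternate since the segments next to the removed block have the layer other than l.\<close>

fun is_plus :: "'v bvert \<Rightarrow> bool" where
  "is_plus (Pl _) = True" | "is_plus (Mi _) = False"

lemma bip_edge_is_plus: "bip_edge E a b \<Longrightarrow> is_plus a \<longleftrightarrow> \<not> is_plus b"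
  unfolding bip_edge_def by (cases a; cases b) (auto simp: doubleton_eq_iff)

lemma bip_edge_commute: "bip_edge E a b \<longleftrightarrow> bip_edge E b a"
  unfolding bip_edge_def by (auto simp: insert_commute)

lemma bip_edge_MiD: "bip_edge M (Mi v) b \<Longrightarrow> \<exists>u. (u, v) \<in> M"
  unfolding bip_edge_def by (auto simp: doubleton_eq_iff)

definition plus_matched_walk ::
  "('v \<times> 'v) set \<Rightarrow> ('v \<times> 'v) set \<Rightarrow> 'v bvert list \<Rightarrow> bool" where
  "plus_matched_walk E M p \<longleftrightarrow> (\<forall>n. Suc n < length p \<longrightarrow>
     bip_edge E (p ! n) (p ! Suc n) \<and> (bip_edge M (p ! n) (p ! Suc n) \<longleftrightarrow> is_plus (p ! n)))"

lemma alt_path_plus_matched_walk: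
  assumes p: "alt_path E M p u v" and u: "\<forall>w. (w, u) \<notin> M"
  shows "plus_matched_walk E M p"
proof -
  have E: "bip_edge E (p ! n) (p ! Suc n)" if "Suc n < length p" for n
    using p that unfolding alt_path_def by blast
  have "Suc n < length p \<longrightarrow> (bip_edge M (p ! n) (p ! Suc n) \<longleftrightarrow> is_plus (p ! n))" for n
  proof (induction n)
    case 0
    have "p ! 0 = Mi u" using p unfolding alt_path_def by (metis hd_conv_nth)
    then show ?case using bip_edge_MiD[of M u] u by auto
  next
    case (Suc n)
    show ?case
    proof
      assume n: "Suc (Suc n) < length p"
      then have "bip_edge M (p ! n) (p ! Suc n) \<longleftrightarrow> \<not> bip_edge M (p ! Suc n) (p ! Suc (Suc n))"
        using p unfolding alt_path_def by blast
      moreover have "is_plus (p ! n) \<longleftrightarrow> \<not> is_plus (p ! Suc n)"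
        using bip_edge_is_plus E n by (meson Suc_lessD)
      ultimately show "bip_edge M (p ! Suc n) (p ! Suc (Suc n)) \<longleftrightarrow> is_plus (p ! Suc n)"
        using Suc n by auto
    qed
  qed
  with E show ?thesis unfolding plus_matched_walk_def by blast
qed

lemma plus_matched_walk_alt_path:
  assumes "plus_matched_walk E M p" "p \<noteq> []" "hd p = Mi u" "last p = Mi v" "distinct p"
  shows "alt_path E M p u v"
  using assms unfolding alt_path_def plus_matched_walk_def
  by (metis Suc_lessD bip_edge_is_plus)

lemma alt_path_rev:
  assumes p: "alt_path E M p u v"
  shows "alt_path E M (rev p) v u"
  unfolding alt_path_def
proof (intro conjI allI impI)
  fix n assume n: "Suc n < length (rev p)"
  then have "bip_edge E (p ! (length p - Suc (Suc n))) (p ! Suc (length p - Suc (Suc n)))"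
    using p unfolding alt_path_def by auto
  moreover have "Suc (length p - Suc (Suc n)) = length p - Suc n" using n by simp
  ultimately show "bip_edge E (rev p ! n) (rev p ! Suc n)"
    using n by (simp add: rev_nth bip_edge_commute)
next
  fix n assume n: "Suc (Suc n) < length (rev p)"
  define m where "m = length p - Suc (Suc (Suc n))"
  have "Suc (Suc m) < length p" using n by (simp add: m_def)
  then have "bip_edge M (p ! m) (p ! Suc m) \<longleftrightarrow> \<not> bip_edge M (p ! Suc m) (p ! Suc (Suc m))"
    using p unfolding alt_path_def by blast
  moreover have "rev p ! n = p ! Suc (Suc m)" "rev p ! Suc n = p ! Suc m"
    "rev p ! Suc (Suc n) = p ! m"
    using n by (simp_all add: rev_nth m_def Suc_diff_Suc)
  ultimately show "bip_edge M (rev p ! n) (rev p ! Suc n) \<longleftrightarrow>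
      \<not> bip_edge M (rev p ! Suc n) (rev p ! Suc (Suc n))"
    by (metis bip_edge_commute)
qed (use p in \<open>auto simp: alt_path_def hd_rev last_rev\<close>)

lemma plus_matched_walk_splice:
  assumes p: "plus_matched_walk E M p" and q: "plus_matched_walk E M q"
    and "a < length p" "b < length q" "p ! a = q ! b"
  shows "plus_matched_walk E M (take a p @ drop b q)"
  unfolding plus_matched_walk_def
proof (intro allI impI)
  fix n
  let ?r = "take a p @ drop b q"
  assume n: "Suc n < length ?r"
  consider "Suc n < a" | "Suc n = a" | "a \<le> n" by linarith
  then have "?r ! n = p ! n \<and> ?r ! Suc n = p ! Suc n \<and> Suc n < length p \<or>
      ?r ! n = q ! (b + (n - a)) \<and> ?r ! Suc n = q ! Suc (b + (n - a)) \<and>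
      Suc (b + (n - a)) < length q"
    using assms n by cases (auto simp: nth_append Suc_diff_le)
  then show "bip_edge E (?r ! n) (?r ! Suc n) \<and>
      (bip_edge M (?r ! n) (?r ! Suc n) \<longleftrightarrow> is_plus (?r ! n))"
    using p q unfolding plus_matched_walk_def by metis
qed

lemma alt_path_splice:
  assumes p: "alt_path E M p u v" "\<forall>w. (w, u) \<notin> M"
    and q: "alt_path E M q u' v'" "\<forall>w. (w, u') \<notin> M"
    and meet: "set p \<inter> set q \<noteq> {}"
  shows "\<exists>r. alt_path E M r u v'"
proof -
  have "\<exists>k. k < length p \<and> p ! k \<in> set q" using meet by (auto simp: in_set_conv_nth)
  then obtain k where k: "k < length p" "p ! k \<in> set q" and first: "\<forall>m<k. p ! m \<notin> set q"
    by (auto simp: exists_least_iff[of "\<lambda>k. k < length p \<and> p ! k \<in> set q"])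
  then obtain b where b: "b < length q" "q ! b = p ! k" by (auto simp: in_set_conv_nth)
  let ?r = "take k p @ drop b q"
  have "plus_matched_walk E M ?r"
    using plus_matched_walk_splice[OF alt_path_plus_matched_walk[OF p]
        alt_path_plus_matched_walk[OF q] k(1) b(1)] b
    by simp
  moreover have "set (take k p) \<inter> set (drop b q) = {}"
    using first set_drop_subset[of b q] by (fastforce simp: in_set_conv_nth)
  then have "distinct ?r" using p(1) q(1) by (simp add: alt_path_def)
  moreover have "hd ?r = Mi u"
    using p(1) k b by (auto simp: alt_path_def hd_conv_nth nth_append)
  moreover have "last ?r = Mi v'" using q(1) b by (simp add: alt_path_def)
  ultimately show ?thesis using b plus_matched_walk_alt_path[of E M ?r] by auto
qed

lemma set_Int_nonempty_if_path_edges_Int: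
  assumes "path_edges p \<inter> path_edges q \<noteq> {}"
  shows "set p \<inter> set q \<noteq> {}"
proof -
  obtain n m where "Suc n < length p" "Suc m < length q"
    and "{p ! n, p ! Suc n} = {q ! m, q ! Suc m}"
    using assms unfolding path_edges_def by blast
  then have "p ! n \<in> set p \<inter> set q"
    by (metis IntI Suc_lessD insert_iff nth_mem singletonD insertI1)
  then show ?thesis by blast
qed

lemma admissible_seg_merge:
  assumes "admissible_seg V E1 E2 M1 M2 u l v p" "admissible_seg V E1 E2 M1 M2 u' l v' q"
    and "set p \<inter> set q \<noteq> {}"
  shows "\<exists>r. admissible_seg V E1 E2 M1 M2 u l v' r"
proof (cases "l = 1")
  case True
  with assms have "\<exists>r. alt_path E1 M1 r u v'"
    by (intro alt_path_splice[of _ _ p _ v q u'])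
       (auto simp: admissible_seg_def lay_def uncovered_def)
  with assms True show ?thesis by (auto simp: admissible_seg_def lay_def)
next
  case False
  with assms have "\<exists>r. alt_path E2 M2 r v' u"
    by (intro alt_path_splice[of _ _ "rev q" _ u' "rev p" v])
       (auto simp: admissible_seg_def lay_def uncovered_def intro: alt_path_rev)
  with assms False show ?thesis by (auto simp: admissible_seg_def lay_def dest: alt_path_rev)
qed

lemma nth_take_append_drop:
  assumes "i \<le> j" "j \<le> length xs" "k < length (take i xs @ drop j xs)"
  shows "(take i xs @ drop j xs) ! k = xs ! (if k < i then k else k + (j - i))"
  using assms by (auto simp: nth_append min_def add.commute)

lemma distinct_adj_shortcut:
  assumes "distinct_adj xs" "i \<le> j" "xs ! i = xs ! j"
  shows "distinct_adj (take (Suc i) xs @ drop (Suc j) xs)"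
proof -
  have "distinct_adj (take (Suc i) xs)" "distinct_adj (drop (Suc j) xs)"
    using assms(1) by (metis append_take_drop_id distinct_adj_appendD1 distinct_adj_appendD2)+
  moreover have "last (take (Suc i) xs) \<noteq> hd (drop (Suc j) xs)" if "Suc j < length xs"
    using that assms by (simp add: take_Suc_conv_app_nth hd_drop_conv_nth distinct_adj_nth)
  ultimately show ?thesis by (auto simp: distinct_adj_append_iff)
qed

lemma all_Suc_nth_neq_iff_distinct_adj:
  "(\<forall>i. Suc i < length ls \<longrightarrow> ls ! Suc i \<noteq> ls ! i) \<longleftrightarrow> distinct_adj ls"
  by (auto simp: distinct_adj_conv_nth)

lemma clap_w_shortcut:
  assumes clap: "clap_w V E1 E2 M1 M2 vs ls ps"
    and ij: "i \<le> j" "j < length ls" "ls ! i = ls ! j"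
    and seg: "admissible_seg V E1 E2 M1 M2 (vs ! i) (ls ! i) (vs ! Suc j) r"
  shows "clap_w V E1 E2 M1 M2 (take (Suc i) vs @ drop (Suc j) vs)
           (take (Suc i) ls @ drop (Suc j) ls) ((take (Suc i) ps @ drop (Suc j) ps)[i := r])"
proof -
  let ?cut = "\<lambda>xs. take (Suc i) xs @ drop (Suc j) xs"
  have len: "length vs = Suc (length ls)" "length ps = length ls"
    using clap by (simp_all add: clap_w_def)
  have len_cut: "length (?cut vs) = Suc (length (?cut ls))" "length (?cut ps) = length (?cut ls)"
    using len ij by auto
  have "admissible_seg V E1 E2 M1 M2 (?cut vs ! k) (?cut ls ! k) (?cut vs ! Suc k)
      ((?cut ps)[i := r] ! k)" if k: "k < length (?cut ls)" for k
  proof (cases "k = i")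
    case True
    then show ?thesis using seg ij len k by (simp add: nth_take_append_drop)
  next
    case False
    define k' where "k' = (if k < Suc i then k else k + (j - i))"
    have "k' < length ls" using k ij False by (auto simp: k'_def)
    moreover have "?cut vs ! k = vs ! k'" "?cut vs ! Suc k = vs ! Suc k'" "?cut ls ! k = ls ! k'"
      "(?cut ps)[i := r] ! k = ps ! k'"
      using k ij len len_cut False by (simp_all add: nth_take_append_drop k'_def)
    ultimately show ?thesis using clap by (simp add: clap_w_def)
  qed
  moreover have "distinct_adj (?cut ls)"
    using clap by (intro distinct_adj_shortcut ij(1,3))
      (simp add: clap_w_def all_Suc_nth_neq_iff_distinct_adj)
  moreover have "hd (?cut vs) = hd vs" "last (?cut vs) = last vs" "distinct (?cut vs)"
    using clap ij len by (auto simp: clap_w_def hd_append set_take_disj_set_drop_if_distinct)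
  ultimately show ?thesis
    using clap len_cut unfolding clap_w_def all_Suc_nth_neq_iff_distinct_adj by simp
qed

theorem mainTheorem4:
  fixes V :: "'v set" and E1 E2 M1 M2 :: "('v \<times> 'v) set"
    and vs :: "'v list" and ls :: "nat list" and ps :: "'v bvert list list"
    and l i j :: nat
  assumes "finite V" and "E1 \<subseteq> V \<times> V" and "E2 \<subseteq> V \<times> V"
    and "is_matching E1 M1" and "is_matching E2 M2"
    and "clap_w V E1 E2 M1 M2 vs ls ps"
    and "\<forall>vs' ls'. clap V E1 E2 M1 M2 vs' ls' \<and> hd vs' = hd vs \<and> last vs' = last vs
           \<longrightarrow> length ls \<le> length ls'"
    and "l \<in> {1, 2}"
    and "i < j" and "j < length ls" and "ls ! i = l" and "ls ! j = l"
    and "path_edges (ps ! i) \<inter> path_edges (ps ! j) \<noteq> {}"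
  shows "\<exists>vs' ls'. clap V E1 E2 M1 M2 vs' ls' \<and> hd vs' = hd vs \<and> last vs' = last vs
           \<and> length ls' < length ls"
proof -
  note clap = assms(6) and ij = assms(9-12)
  let ?vs = "take (Suc i) vs @ drop (Suc j) vs" and ?ls = "take (Suc i) ls @ drop (Suc j) ls"
  have "admissible_seg V E1 E2 M1 M2 (vs ! i) l (vs ! Suc i) (ps ! i)"
    and "admissible_seg V E1 E2 M1 M2 (vs ! j) l (vs ! Suc j) (ps ! j)"
    using clap ij unfolding clap_w_def by auto
  from admissible_seg_merge[OF this set_Int_nonempty_if_path_edges_Int[OF assms(13)]]
  obtain r where "admissible_seg V E1 E2 M1 M2 (vs ! i) l (vs ! Suc j) r" by blast
  then have "clap_w V E1 E2 M1 M2 ?vs ?ls ((take (Suc i) ps @ drop (Suc j) ps)[i := r])"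
    using clap ij by (intro clap_w_shortcut) auto
  moreover have "length vs = Suc (length ls)" using clap by (simp add: clap_w_def)
  then have "hd ?vs = hd vs" "last ?vs = last vs" "length ?ls < length ls"
    using ij by (auto simp: hd_append)
  ultimately show ?thesis unfolding clap_def by blast
qed

end
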